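(* Let $\overline{x}$ be a set of variables, $y$ a variable not in $\overline{x}$, $X\subseteq[0,1]^{\overline{x}}$ a closed set, $\mathbf f\colon X\to[0,1]$ a continuous function, and $\Sigma_{\mathbf f}(\overline{x},y)$ the theory defined below. Then $\Sigma_{\mathbf f}$ implicitly defines $y$ over $\overline{x}$.
   Context: An MV-algebra is an algebra $(A,\oplus,\neg,0)$ of type $(2,1,0)$ such that $(A,\oplus,0)$ is a commutative monoid, $\neg\neg a=a$, $a\oplus\neg 0=\neg 0$, and $\neg(\neg a\oplus b)\oplus b=\neg(\neg b\oplus a)\oplus a$. Derived operations: $1:=\neg 0$, $a\odot b:=\neg(\neg a\oplus\neg b)$, $a\ominus b:=a\odot\neg b$, $a\vee b:=\neg(\neg a\oplus b)\oplus b$ (join of a lattice order $\le$), $d(a,b):=(a\ominus b)\oplus(b\ominus a)$. An ideal of an MV-algebra is a subset containing $0$, downward closed for $\le$ and closed under $\oplus$. Let $\mathcal{L}=\{\delta,\oplus,\neg,0\}$ of type $(\omega,2,1,0)$; $\tfrac12(x):=\delta(x,0,0,\dots)$. A $\delta$-algebra is an $\mathcal{L}$-algebra whose MV-reduct is an MV-algebra and satisfying for all $x,y,\vec x,\vec y$: (i) $d(\delta(\vec x),\delta(x_1,0,0,\dots))=\delta(0,x_2,x_3,\dots)$; (ii) $\tfrac12(\delta(\vec x))=\delta(\tfrac12(x_1),\tfrac12(x_2),\dots)$; (iii) $\delta(x,x,\dots)=x$; (iv) $\delta(0,\vec x)=\tfrac12(\delta(\vec x))$; (v) $\delta(\vec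 x)\le\delta(x_1\oplus y_1,x_2\oplus y_2,\dots)$; (vi) $\tfrac12(x\ominus y)=\tfrac12(x)\ominus\tfrac12(y)$. $[0,1]$ is the standard $\delta$-algebra with $x\oplus y=\min\{1,x+y\}$, $\neg x=1-x$, $\delta(\vec x)=\sum_i x_i/2^i$. $T(\overline{x})$: terms in $\overline{x}$; $F(\overline{x})$: free $\delta$-algebra over $\overline{x}$; $\rho\colon T(\overline{x})\to F(\overline{x})$ the canonical quotient. For an assignment $f$ into an $\mathcal{L}$-algebra $A$, $A,f\models\Sigma$ means $\bar f(s)=\bar f(t)$ for all $s\approx t\in\Sigma$, $\bar f$ being the homomorphic extension to terms. $\Sigma\models_\Delta\sigma$ means every assignment into every $\delta$-algebra satisfying $\Sigma$ satisfies $\sigma$. For a $\delta$-algebra $A$, $\mathrm{Max}\,A$ is the space of MV-homomorphisms $A\to[0,1]$ with topology induced by $[0,1]^A$, and for $S\subseteq A$, $V(S):=\{h\in\mathrm{Max}\,A: h(a)=0\ \forall a\in S\}$. For any set of variables $\overline{w}$, $[0,1]^{\overline{w}}$ (product topology) is identified with $\mathrm{Max}\,F(\overline{w})$ via the homeomorphism $h\mapsto(w\mapsto h(\rho(w)))$. Given a theory $\Sigma(\overline{x},y)$ and a variable $z$, $\Sigma(\overline{x},z)$ is obtained by replacing $y$ by $z$. $\Sigma$ implicitly defines $y$ over $\overline{x}$ if $\Sigma(\overline{x},y)\cup\Sigma(\overline{x},z)\models_\Delta y\approx z$ for every variable $z$; it explicitly defines $y$ over $\overline{x}$ if there is a term $s_y(\overline{x})$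 with $\Sigma(\overline{x},y)\models_\Delta y\approx s_y$. Definition of $\Sigma_{\mathbf f}$: the graph $G_{\mathbf f}=\{g\in[0,1]^{\overline{x}\cup\{y\}}: g|_{\overline{x}}\in X,\ g(y)=\mathbf f(g|_{\overline{x}})\}$ is a closed subset of $[0,1]^{\overline{x}\cup\{y\}}\cong\mathrm{Max}\,F(\overline{x},y)$; fix an ideal $J_{\mathbf f}$ of $F(\overline{x},y)$ with $V(J_{\mathbf f})=G_{\mathbf f}$ under this identification (one exists), and set $\Sigma_{\mathbf f}(\overline{x},y):=\{s\approx 0: s\in T(\overline{x},y),\ \rho(s)\in J_{\mathbf f}\}$. *)

theory Defs
  imports "HOL-Analysis.Analysis"
begin

text \<open>delta is omega-ary: its argument list (x_1, x_2, ...) is a function nat => term,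
  with index 0 standing for x_1.\<close>

datatype 'v trm = Var 'v | Zero | Neg "'v trm" | Plus "'v trm" "'v trm" | Delta "nat \<Rightarrow> 'v trm"

definition trms :: "'v set \<Rightarrow> 'v trm set" where
  "trms W = {s. set_trm s \<subseteq> W}"

section \<open>L-algebras (carrier = the whole type) and evaluation\<close>

record 'a lalg =
  dlt :: "(nat \<Rightarrow> 'a) \<Rightarrow> 'a"
  pls :: "'a \<Rightarrow> 'a \<Rightarrow> 'a"
  ng  :: "'a \<Rightarrow> 'a"
  zr  :: "'a"

primrec eval :: "'a lalg \<Rightarrow> ('v \<Rightarrow> 'a) \<Rightarrow> 'v trm \<Rightarrow> 'a" where
  "eval A e (Var v) = e v"
| "eval A e Zero = zr A"
| "eval A e (Neg s) = ng A (eval A e s)"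
| "eval A e (Plus s t) = pls A (eval A e s) (eval A e t)"
| "eval A e (Delta ts) = dlt A (\<lambda>i. eval A e (ts i))"

definition odot :: "('a\<Rightarrow>'a\<Rightarrow>'a) \<Rightarrow> ('a\<Rightarrow>'a) \<Rightarrow> 'a \<Rightarrow> 'a \<Rightarrow> 'a" where
  "odot P N a b = N (P (N a) (N b))"
definition ominus :: "('a\<Rightarrow>'a\<Rightarrow>'a) \<Rightarrow> ('a\<Rightarrow>'a) \<Rightarrow> 'a \<Rightarrow> 'a \<Rightarrow> 'a" where
  "ominus P N a b = odot P N a (N b)"
definition join :: "('a\<Rightarrow>'a\<Rightarrow>'a) \<Rightarrow> ('a\<Rightarrow>'a) \<Rightarrow> 'a \<Rightarrow> 'a \<Rightarrow> 'a" where
  "join P N a b = P (N (P (N a) b)) b"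
definition dist :: "('a\<Rightarrow>'a\<Rightarrow>'a) \<Rightarrow> ('a\<Rightarrow>'a) \<Rightarrow> 'a \<Rightarrow> 'a \<Rightarrow> 'a" where
  "dist P N a b = P (ominus P N a b) (ominus P N b a)"
definition half :: "((nat \<Rightarrow> 'a) \<Rightarrow> 'a) \<Rightarrow> 'a \<Rightarrow> 'a \<Rightarrow> 'a" where
  "half D Z x = D (\<lambda>i. if i = 0 then x else Z)"

text \<open>With eq = (=) these are the MV-algebra / delta-algebra axioms; with eq a congruence
  on terms they say that the quotient is a delta-algebra.  The order a \<le> b is a \<or> b = b.\<close>

definition mv_ax :: "('a\<Rightarrow>'a\<Rightarrow>bool) \<Rightarrow> ('a\<Rightarrow>'a\<Rightarrow>'a) \<Rightarrow> ('a\<Rightarrow>'a) \<Rightarrow> 'a \<Rightarrow> bool" where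
  "mv_ax eq P N Z \<longleftrightarrow>
     (\<forall>a b c. eq (P (P a b) c) (P a (P b c))) \<and>
     (\<forall>a b. eq (P a b) (P b a)) \<and>
     (\<forall>a. eq (P a Z) a) \<and>
     (\<forall>a. eq (N (N a)) a) \<and>
     (\<forall>a. eq (P a (N Z)) (N Z)) \<and>
     (\<forall>a b. eq (P (N (P (N a) b)) b) (P (N (P (N b) a)) a))"

definition delta_ax :: "('a\<Rightarrow>'a\<Rightarrow>bool) \<Rightarrow> ((nat \<Rightarrow> 'a) \<Rightarrow> 'a) \<Rightarrow> ('a\<Rightarrow>'a\<Rightarrow>'a) \<Rightarrow> ('a\<Rightarrow>'a) \<Rightarrow> 'a \<Rightarrow> bool" where
  "delta_ax eq D P N Z \<longleftrightarrow> mv_ax eq P N Z \<and>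
     (\<forall>xs. eq (dist P N (D xs) (D (\<lambda>i. if i = 0 then xs 0 else Z)))
              (D (\<lambda>i. if i = 0 then Z else xs i))) \<and>
     (\<forall>xs. eq (half D Z (D xs)) (D (\<lambda>i. half D Z (xs i)))) \<and>
     (\<forall>x. eq (D (\<lambda>_. x)) x) \<and>
     (\<forall>xs. eq (D (\<lambda>i. if i = 0 then Z else xs (i - 1))) (half D Z (D xs))) \<and>
     (\<forall>xs ys. eq (join P N (D xs) (D (\<lambda>i. P (xs i) (ys i)))) (D (\<lambda>i. P (xs i) (ys i)))) \<and>
     (\<forall>x y. eq (half D Z (ominus P N x y)) (ominus P N (half D Z x) (half D Z y)))"

definition is_dalg :: "'a lalg \<Rightarrow> bool" where
  "is_dalg A \<longleftrightarrow> delta_ax (=) (dlt A) (pls A) (ng A) (zr A)"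

type_synonym 'v thy = "('v trm \<times> 'v trm) set"

definition sat :: "'a lalg \<Rightarrow> ('v \<Rightarrow> 'a) \<Rightarrow> 'v thy \<Rightarrow> bool" where
  "sat A e \<Sigma> \<longleftrightarrow> (\<forall>(s, t) \<in> \<Sigma>. eval A e s = eval A e t)"

text \<open>Consequence over all delta-algebras whose carrier is the type 'a; the quantification
  over all delta-algebras is obtained by leaving 'a free in the main theorem.\<close>
definition models_Delta :: "'a itself \<Rightarrow> 'v thy \<Rightarrow> 'v trm \<times> 'v trm \<Rightarrow> bool" where
  "models_Delta _ \<Sigma> \<sigma> \<longleftrightarrow>
     (\<forall>A :: 'a lalg. is_dalg A \<longrightarrow> (\<forall>e. sat A e \<Sigma> \<longrightarrow> eval A e (fst \<sigma>) = eval A e (snd \<sigma>)))"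

definition rename_thy :: "'v \<Rightarrow> 'v \<Rightarrow> 'v thy \<Rightarrow> 'v thy" where
  "rename_thy y z \<Sigma> = (\<lambda>(s, t). (map_trm (\<lambda>v. if v = y then z else v) s,
                                    map_trm (\<lambda>v. if v = y then z else v) t)) ` \<Sigma>"

definition implicitly_defines :: "'a itself \<Rightarrow> 'v thy \<Rightarrow> 'v \<Rightarrow> bool" where
  "implicitly_defines T \<Sigma> y \<longleftrightarrow>
     (\<forall>z. models_Delta T (\<Sigma> \<union> rename_thy y z \<Sigma>) (Var y, Var z))"

section \<open>The free delta-algebra F(W) = T(W)/~ , presented by its kernel congruence\<close>

definition dcong :: "('v trm \<times> 'v trm) set \<Rightarrow> bool" where
  "dcong \<theta> \<longleftrightarrow> equiv UNIV \<theta> \<and>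
     (\<forall>s t. (s, t) \<in> \<theta> \<longrightarrow> (Neg s, Neg t) \<in> \<theta>) \<and>
     (\<forall>s1 s2 t1 t2. (s1, t1) \<in> \<theta> \<longrightarrow> (s2, t2) \<in> \<theta> \<longrightarrow> (Plus s1 s2, Plus t1 t2) \<in> \<theta>) \<and>
     (\<forall>ss tt. (\<forall>i. (ss i, tt i) \<in> \<theta>) \<longrightarrow> (Delta ss, Delta tt) \<in> \<theta>) \<and>
     delta_ax (\<lambda>s t. (s, t) \<in> \<theta>) Delta Plus Neg Zero"

definition feq :: "'v trm \<Rightarrow> 'v trm \<Rightarrow> bool" where
  "feq s t \<longleftrightarrow> (s, t) \<in> \<Inter> {\<theta>. dcong \<theta>}"

text \<open>Ideals of F(W), represented by their preimage under rho (a feq-saturated subset of T(W)).\<close>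
definition F_ideal :: "'v set \<Rightarrow> 'v trm set \<Rightarrow> bool" where
  "F_ideal W J \<longleftrightarrow> J \<subseteq> trms W \<and>
     (\<forall>s\<in>J. \<forall>t\<in>trms W. feq s t \<longrightarrow> t \<in> J) \<and>
     Zero \<in> J \<and>
     (\<forall>t\<in>J. \<forall>s\<in>trms W. feq (join Plus Neg s t) t \<longrightarrow> s \<in> J) \<and>
     (\<forall>s\<in>J. \<forall>t\<in>J. Plus s t \<in> J)"

text \<open>Max F(W): MV-homomorphisms F(W) -> [0,1], represented as functions h on T(W)
  constant on rho-classes (extended by 0 outside T(W)).\<close>
definition MaxF :: "'v set \<Rightarrow> ('v trm \<Rightarrow> real) set" where
  "MaxF W = {h. (\<forall>s\<in>trms W. h s \<in> {0..1}) \<and>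
     (\<forall>s\<in>trms W. \<forall>t\<in>trms W. feq s t \<longrightarrow> h s = h t) \<and>
     h Zero = 0 \<and>
     (\<forall>s\<in>trms W. h (Neg s) = 1 - h s) \<and>
     (\<forall>s\<in>trms W. \<forall>t\<in>trms W. h (Plus s t) = min 1 (h s + h t)) \<and>
     (\<forall>s. s \<notin> trms W \<longrightarrow> h s = 0)}"

definition V_F :: "'v set \<Rightarrow> 'v trm set \<Rightarrow> ('v trm \<Rightarrow> real) set" where
  "V_F W S = {h \<in> MaxF W. \<forall>a\<in>S. h a = 0}"

text \<open>The identification Max F(W) = [0,1]^W, h |-> (w |-> h(rho w)).\<close>
definition pt_of :: "'v set \<Rightarrow> ('v trm \<Rightarrow> real) \<Rightarrow> ('v \<Rightarrow> real)" where
  "pt_of W h = restrict (\<lambda>w. h (Var w)) W"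

definition cube :: "'v set \<Rightarrow> ('v \<Rightarrow> real) topology" where
  "cube W = product_topology (\<lambda>_. top_of_set {0..1}) W"

definition graph_f :: "'v set \<Rightarrow> 'v \<Rightarrow> ('v \<Rightarrow> real) set \<Rightarrow> (('v \<Rightarrow> real) \<Rightarrow> real) \<Rightarrow> ('v \<Rightarrow> real) set" where
  "graph_f xs y X f = {g \<in> PiE (insert y xs) (\<lambda>_. {0..1}).
       restrict g xs \<in> X \<and> g y = f (restrict g xs)}"

definition Sigma_of :: "'v set \<Rightarrow> 'v trm set \<Rightarrow> 'v thy" where
  "Sigma_of W J = {(s, Zero) | s. s \<in> trms W \<and> s \<in> J}"

end

theory Submission
  imports Defs
begin

text \<open>Suppose \<open>\<Sigma>\<^sub>f(x, y)\<close> and \<open>\<Sigma>\<^sub>f(x, z)\<close> hold under an assignment \<open>e\<close> in a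
  \<open>\<delta>\<close>-algebra \<open>A\<close>. Composing \<open>e\<close> with any MV-homomorphism \<open>k : A \<rightarrow> [0,1]\<close> gives a point
  of \<open>V(J\<^sub>f)\<close>, i.e. of the graph of \<open>f\<close>, so \<open>k(e y) = f(k \<circ> e|\<^sub>x) = k(e z)\<close>.
  It remains to see that such homomorphisms separate the points of every \<open>\<delta>\<close>-algebra.
  A \<open>\<delta>\<close>-algebra contains the dyadic rationals \<open>j/2^n\<close>, and it is archimedean: if
  \<open>c \<le> 1/2^n\<close> for all \<open>n\<close>, then \<open>V = \<delta>(c, 2c, 4c, \<dots>)\<close> satisfies \<open>V = c/2 \<oplus> V\<close> with
  \<open>V \<le> 1/2\<close>, forcing \<open>c = 0\<close>. So for \<open>c \<noteq> 0\<close> some \<open>c \<ominus> 1/2^n\<close> is nonzero; an ideal \<open>M\<close>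
  maximal among those avoiding it makes \<open>A/M\<close> linearly ordered, and sending \<open>a\<close> to the
  supremum of the dyadics below \<open>a\<close> modulo \<open>M\<close> is a homomorphism into \<open>[0,1]\<close> that is
  at least \<open>1/2^n\<close> on \<open>c\<close>.\<close>

section \<open>MV-algebras\<close>

locale mv_algebra =
  fixes P :: "'a \<Rightarrow> 'a \<Rightarrow> 'a" (infixl "\<oplus>" 65) and N :: "'a \<Rightarrow> 'a" and Z :: 'a
  assumes mv_axioms: "mv_ax (=) P N Z"
begin

abbreviation one where "one \<equiv> N Z"

lemma add_assoc: "(a \<oplus> b) \<oplus> c = a \<oplus> (b \<oplus> c)"
  using mv_axioms unfolding mv_ax_def by blast
lemma add_commute: "a \<oplus> b = b \<oplus> a"
  using mv_axioms unfolding mv_ax_def by blast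
lemma add_zero[simp]: "a \<oplus> Z = a"
  using mv_axioms unfolding mv_ax_def by blast
lemma neg_neg[simp]: "N (N a) = a"
  using mv_axioms unfolding mv_ax_def by blast
lemma lukasiewicz: "N (N a \<oplus> b) \<oplus> b = N (N b \<oplus> a) \<oplus> a"
  using mv_axioms unfolding mv_ax_def by blast

lemma add_left_commute: "a \<oplus> (b \<oplus> c) = b \<oplus> (a \<oplus> c)"
  by (metis add_assoc add_commute)
lemmas add_ac = add_assoc add_commute add_left_commute

lemma zero_add[simp]: "Z \<oplus> a = a"
  by (metis add_zero add_commute)
lemma add_one[simp]: "a \<oplus> one = one" "one \<oplus> a = one"
  using mv_axioms add_commute unfolding mv_ax_def by metis+
lemma add_neg_self[simp]:
  "a \<oplus> N a = one" "N a \<oplus> a = one" "a \<oplus> (N a \<oplus> b) = one" "N a \<oplus> (a \<oplus> b) = one"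
proof -
  show 1: "a \<oplus> N a = one" using lukasiewicz[of a one] by (simp add: add_commute)
  then show "N a \<oplus> a = one" by (simp add: add_commute)
  show "a \<oplus> (N a \<oplus> b) = one" "N a \<oplus> (a \<oplus> b) = one"
    by (metis 1 add_assoc add_commute add_one(2))+
qed

definition leq (infix "\<preceq>" 50) where "x \<preceq> y \<longleftrightarrow> N x \<oplus> y = one"
definition minus (infixl "\<ominus>" 65) where "x \<ominus> y = N (N x \<oplus> y)"
definition times (infixl "\<odot>" 70) where "x \<odot> y = N (N x \<oplus> N y)"
definition meet where "meet a b = b \<odot> (N b \<oplus> a)"
definition ntimes :: "nat \<Rightarrow> 'a \<Rightarrow> 'a" where "ntimes n x = ((\<oplus>) x ^^ n) Z"

lemma leq_refl[simp]: "x \<preceq> x" by (simp add: leq_def)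
lemma zero_leq[simp]: "Z \<preceq> x" by (simp add: leq_def)
lemma leq_one[simp]: "x \<preceq> one" by (simp add: leq_def)
lemma leq_antisym: "x \<preceq> y \<Longrightarrow> y \<preceq> x \<Longrightarrow> x = y"
  using lukasiewicz[of x y] by (simp add: leq_def)
lemma minus_add_cancel: "x \<preceq> y \<Longrightarrow> (y \<ominus> x) \<oplus> x = y"
  using lukasiewicz[of x y] by (simp add: leq_def minus_def)
lemma add_minus_cancel: "x \<preceq> y \<Longrightarrow> x \<oplus> (y \<ominus> x) = y"
  using minus_add_cancel add_commute by metis
lemma leq_add[simp]: "x \<preceq> x \<oplus> w" "x \<preceq> w \<oplus> x"
  by (simp_all add: leq_def add_ac)
lemma leq_iff_add: "x \<preceq> y \<longleftrightarrow> (\<exists>w. y = x \<oplus> w)"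
  using add_minus_cancel leq_add by metis
lemma leq_trans [trans]: "x \<preceq> y \<Longrightarrow> y \<preceq> z \<Longrightarrow> x \<preceq> z"
  unfolding leq_iff_add by (metis add_assoc)
lemma add_right_mono: "x \<preceq> y \<Longrightarrow> x \<oplus> z \<preceq> y \<oplus> z"
  unfolding leq_iff_add by (metis add_ac)
lemma add_mono: "x \<preceq> y \<Longrightarrow> x' \<preceq> y' \<Longrightarrow> x \<oplus> x' \<preceq> y \<oplus> y'"
  by (metis add_right_mono leq_trans add_commute)
lemma neg_antimono: "x \<preceq> y \<Longrightarrow> N y \<preceq> N x"
  by (simp add: leq_def add_commute)
lemma neg_leq_neg_iff: "N y \<preceq> N x \<longleftrightarrow> x \<preceq> y"
  by (metis neg_antimono neg_neg)
lemma minus_leq_iff: "x \<ominus> p \<preceq> s \<longleftrightarrow> x \<preceq> p \<oplus> s"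
  by (simp add: leq_def minus_def add_assoc)
lemma minus_eq_zero_iff: "x \<ominus> y = Z \<longleftrightarrow> x \<preceq> y"
  by (metis leq_def minus_def neg_neg)
lemma minus_leq: "x \<ominus> y \<preceq> x"
  unfolding leq_def minus_def neg_neg by (metis add_neg_self add_ac)
lemma leq_zero_iff: "x \<preceq> Z \<longleftrightarrow> x = Z"
  by (metis leq_antisym zero_leq leq_refl)
lemma leq_minus_add: "w \<preceq> (w \<ominus> x) \<oplus> x"
  by (metis lukasiewicz leq_add minus_def)
lemma minus_mono: "x \<preceq> z \<Longrightarrow> x \<ominus> y \<preceq> z \<ominus> y"
  by (simp add: minus_def neg_leq_neg_iff add_right_mono)

lemma times_leq: "x \<odot> y \<preceq> x"
  unfolding leq_def times_def neg_neg by (metis add_neg_self add_ac)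
lemma times_commute: "x \<odot> y = y \<odot> x"
  by (simp add: times_def add_commute)
lemma minus_eq_times_neg: "x \<ominus> y = x \<odot> N y"
  by (simp add: minus_def times_def)

lemma meet_commute: "meet a b = meet b a"
  using lukasiewicz[of "N a" "N b"] by (simp add: meet_def times_def add_commute)
lemma meet_eq_left: "x \<preceq> y \<Longrightarrow> meet x y = x"
  using meet_commute[of x y] by (simp add: leq_def meet_def times_def)
lemma meet_eq_neg: "meet a b = N ((N a \<ominus> N b) \<oplus> N b)"
  by (simp add: meet_def times_def minus_def add_commute)
lemma leq_meet: "w \<preceq> a \<Longrightarrow> w \<preceq> b \<Longrightarrow> w \<preceq> meet a b"
  unfolding meet_eq_neg by (metis add_right_mono minus_add_cancel minus_mono neg_antimono neg_neg)
lemma meet_leq_right: "meet a b \<preceq> b"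
  by (simp add: meet_def times_leq)
lemma minus_add_meet: "(a \<ominus> b) \<oplus> meet a b = a"
proof -
  have "a \<ominus> (a \<ominus> b) = meet b a" by (simp add: minus_def meet_def times_def)
  then show ?thesis using minus_add_cancel[OF minus_leq, of a b] by (simp add: add_commute meet_commute)
qed
lemma add_minus_cancel_right: "x \<preceq> N y \<Longrightarrow> (x \<oplus> y) \<ominus> y = x"
  using meet_eq_left[of x "N y"] by (simp add: meet_def times_def minus_def add_commute)

text \<open>Elements below both \<open>a \<ominus> b\<close> and \<open>b \<ominus> a\<close> vanish: adding such a \<open>w\<close> to
  \<open>meet a b\<close> stays below \<open>a\<close> and \<open>b\<close>, hence below the meet itself.\<close>
lemma orthogonal_minus:
  assumes "w \<preceq> a \<ominus> b" "w \<preceq> b \<ominus> a" shows "w = Z"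
proof -
  define m where "m = meet a b"
  have "w \<oplus> m \<preceq> a"
    using add_right_mono[OF assms(1), of m] minus_add_meet[of a b] by (simp add: m_def)
  moreover have "w \<oplus> m \<preceq> b"
    using add_right_mono[OF assms(2), of m] minus_add_meet[of b a] by (simp add: m_def meet_commute)
  ultimately have "w \<oplus> m \<preceq> m" unfolding m_def by (rule leq_meet)
  then have absorb: "w \<oplus> m = m" by (metis leq_antisym leq_add(2))
  have "w \<preceq> N b" using assms(1) by (metis leq_trans minus_eq_times_neg times_commute times_leq)
  also have "N b \<preceq> N m" by (simp add: m_def meet_leq_right neg_antimono)
  finally have "meet w (N m) = w" by (rule meet_eq_left)
  moreover have "meet w (N m) = Z" using absorb by (simp add: meet_def times_def add_commute)
  ultimately show ?thesis by simp
qed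

lemma ntimes_0[simp]: "ntimes 0 x = Z" by (simp add: ntimes_def)
lemma ntimes_Suc: "ntimes (Suc n) x = x \<oplus> ntimes n x" by (simp add: ntimes_def)
lemma ntimes_1[simp]: "ntimes 1 x = x" "ntimes (Suc 0) x = x" by (simp_all add: ntimes_def)
lemma ntimes_add: "ntimes (n + m) x = ntimes n x \<oplus> ntimes m x"
  by (induction n) (simp_all add: ntimes_Suc add_assoc)
lemma ntimes_mono: "n \<le> m \<Longrightarrow> ntimes n x \<preceq> ntimes m x"
  using ntimes_add[of n "m - n" x] by simp

lemma minus_decompose: "w = (w \<ominus> (w \<ominus> x)) \<oplus> (w \<ominus> x)"
  by (metis add_commute minus_add_cancel minus_leq)
lemma minus_minus_leq: "w \<ominus> (w \<ominus> x) \<preceq> x"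
  by (metis add_commute leq_minus_add minus_leq_iff)

text \<open>Splitting \<open>w\<close> as in \<open>minus_decompose\<close> peels off one summand of \<open>ntimes\<close> at a time.\<close>
lemma orthogonal_ntimes_minus:
  "w \<preceq> ntimes n (a \<ominus> b) \<Longrightarrow> w \<preceq> ntimes m (b \<ominus> a) \<Longrightarrow> w = Z"
proof (induction n arbitrary: w)
  case 0 then show ?case by (simp add: leq_zero_iff)
next
  case (Suc n)
  have single: "w \<preceq> a \<ominus> b \<Longrightarrow> w \<preceq> ntimes m (b \<ominus> a) \<Longrightarrow> w = Z" for w
  proof (induction m arbitrary: w)
    case 0 then show ?case by (simp add: leq_zero_iff)
  next
    case (Suc m)
    have "w \<ominus> (w \<ominus> (b \<ominus> a)) = Z"
      using orthogonal_minus Suc.prems(1) minus_minus_leq[of w "b \<ominus> a"] minus_leq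
        leq_trans[of "w \<ominus> (w \<ominus> (b \<ominus> a))"] by blast
    moreover have "w \<ominus> (b \<ominus> a) = Z"
      using Suc.IH[of "w \<ominus> (b \<ominus> a)"] Suc.prems minus_leq[of w "b \<ominus> a"] minus_leq_iff leq_trans
      by (metis ntimes_Suc)
    ultimately show ?case using minus_decompose[of w "b \<ominus> a"] by simp
  qed
  have "w \<ominus> (w \<ominus> (a \<ominus> b)) = Z"
    using single Suc.prems(2) minus_minus_leq[of w "a \<ominus> b"] minus_leq
      leq_trans[of "w \<ominus> (w \<ominus> (a \<ominus> b))"] by blast
  moreover have "w \<ominus> (a \<ominus> b) = Z"
    using Suc.IH[of "w \<ominus> (a \<ominus> b)"] Suc.prems minus_leq[of w "a \<ominus> b"] minus_leq_iff leq_trans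
    by (metis ntimes_Suc)
  ultimately show ?case using minus_decompose[of w "a \<ominus> b"] by simp
qed

definition ideal :: "'a set \<Rightarrow> bool" where
  "ideal I \<longleftrightarrow> Z \<in> I \<and> (\<forall>x y. x \<preceq> y \<longrightarrow> y \<in> I \<longrightarrow> x \<in> I) \<and> (\<forall>x\<in>I. \<forall>y\<in>I. x \<oplus> y \<in> I)"

definition ideal_extend :: "'a set \<Rightarrow> 'a \<Rightarrow> 'a set" where
  "ideal_extend I g = {x. \<exists>p\<in>I. \<exists>n. x \<preceq> p \<oplus> ntimes n g}"

definition maximal_avoiding :: "'a set \<Rightarrow> 'a \<Rightarrow> bool" where
  "maximal_avoiding M c \<longleftrightarrow> ideal M \<and> c \<notin> M \<and> (\<forall>I. ideal I \<and> c \<notin> I \<and> M \<subseteq> I \<longrightarrow> I = M)"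

lemma ideal_zero: "ideal I \<Longrightarrow> Z \<in> I"
  by (simp add: ideal_def)
lemma ideal_down: "ideal I \<Longrightarrow> x \<preceq> y \<Longrightarrow> y \<in> I \<Longrightarrow> x \<in> I"
  by (simp add: ideal_def)
lemma ideal_add: "ideal I \<Longrightarrow> x \<in> I \<Longrightarrow> y \<in> I \<Longrightarrow> x \<oplus> y \<in> I"
  by (simp add: ideal_def)
lemma ideal_ntimes: "ideal I \<Longrightarrow> g \<in> I \<Longrightarrow> ntimes n g \<in> I"
  by (induction n) (simp_all add: ideal_zero ideal_add ntimes_Suc)

lemma ideal_ideal_extend:
  assumes "ideal I" shows "ideal (ideal_extend I g)"
  unfolding ideal_def
proof (intro conjI allI impI ballI)
  have "Z \<preceq> Z \<oplus> ntimes 0 g" by simp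
  then show "Z \<in> ideal_extend I g" using ideal_zero[OF assms] unfolding ideal_extend_def by blast
  show "x \<in> ideal_extend I g" if "x \<preceq> y" "y \<in> ideal_extend I g" for x y
    using that leq_trans[OF \<open>x \<preceq> y\<close>] unfolding ideal_extend_def by blast
  show "x \<oplus> y \<in> ideal_extend I g" if xy: "x \<in> ideal_extend I g" "y \<in> ideal_extend I g" for x y
  proof -
    obtain p n q m where pq: "p \<in> I" "x \<preceq> p \<oplus> ntimes n g" "q \<in> I" "y \<preceq> q \<oplus> ntimes m g"
      using xy unfolding ideal_extend_def by blast
    then have "x \<oplus> y \<preceq> (p \<oplus> ntimes n g) \<oplus> (q \<oplus> ntimes m g)" by (rule_tac add_mono)
    also have "\<dots> = (p \<oplus> q) \<oplus> ntimes (n + m) g" by (simp add: ntimes_add add_ac)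
    finally show ?thesis using ideal_add[OF assms pq(1,3)] unfolding ideal_extend_def by blast
  qed
qed

lemma subset_ideal_extend: "I \<subseteq> ideal_extend I g"
proof
  fix x assume "x \<in> I"
  moreover have "x \<preceq> x \<oplus> ntimes 0 g" by simp
  ultimately show "x \<in> ideal_extend I g" unfolding ideal_extend_def by blast
qed

lemma mem_ideal_extend:
  assumes "ideal I" shows "g \<in> ideal_extend I g"
proof -
  have "g \<preceq> Z \<oplus> ntimes 1 g" by simp
  then show ?thesis using ideal_zero[OF assms] unfolding ideal_extend_def by blast
qed

text \<open>The quotient by an ideal maximal with respect to avoiding some element is linearly
  ordered: otherwise both extensions by \<open>a \<ominus> b\<close> and by \<open>b \<ominus> a\<close> contain \<open>c\<close>, and
  \<open>orthogonal_ntimes_minus\<close> puts \<open>c\<close> into \<open>M\<close>.\<close>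
lemma maximal_avoiding_linear:
  assumes M: "maximal_avoiding M c"
  shows "a \<ominus> b \<in> M \<or> b \<ominus> a \<in> M"
proof (rule ccontr)
  assume neither: "\<not> (a \<ominus> b \<in> M \<or> b \<ominus> a \<in> M)"
  have I: "ideal M" and c: "c \<notin> M" using M by (simp_all add: maximal_avoiding_def)
  have "c \<in> ideal_extend M g" if "g \<notin> M" for g
    using M that ideal_ideal_extend[OF I] subset_ideal_extend mem_ideal_extend[OF I]
    unfolding maximal_avoiding_def by blast
  then obtain p1 n p2 m where
    p: "p1 \<in> M" "c \<preceq> p1 \<oplus> ntimes n (a \<ominus> b)" "p2 \<in> M" "c \<preceq> p2 \<oplus> ntimes m (b \<ominus> a)"
    using neither unfolding ideal_extend_def by blast
  let ?p = "p1 \<oplus> p2"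
  have "c \<preceq> ?p \<oplus> ntimes n (a \<ominus> b)"
    using p(2) by (rule leq_trans) (metis add_right_mono leq_add(1))
  moreover have "c \<preceq> ?p \<oplus> ntimes m (b \<ominus> a)"
    using p(4) by (rule leq_trans) (metis add_right_mono leq_add(2))
  ultimately have "c \<ominus> ?p = Z" by (simp add: minus_leq_iff orthogonal_ntimes_minus)
  then have "c \<preceq> ?p" by (simp add: minus_eq_zero_iff)
  then show False using ideal_add[OF I p(1,3)] ideal_down[OF I] c by blast
qed

lemma exists_maximal_avoiding:
  assumes "c \<noteq> Z" shows "\<exists>M. maximal_avoiding M c"
proof -
  let ?A = "{I. ideal I \<and> c \<notin> I}"
  have "\<exists>U\<in>?A. \<forall>X\<in>C. X \<subseteq> U" if C: "C \<in> chains ?A" for C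
  proof (cases "C = {}")
    case True
    have "ideal {Z}" unfolding ideal_def by (auto simp: leq_zero_iff)
    then show ?thesis using True assms by auto
  next
    case False
    have sub: "C \<subseteq> ?A" and ch: "\<forall>X\<in>C. \<forall>Y\<in>C. X \<subseteq> Y \<or> Y \<subseteq> X"
      using C unfolding chains_def chain_subset_def by auto
    have "ideal (\<Union>C)" unfolding ideal_def
    proof (intro conjI allI impI ballI)
      show "Z \<in> \<Union>C" using False sub ideal_zero by blast
      show "x \<in> \<Union>C" if "x \<preceq> y" "y \<in> \<Union>C" for x y
        using that sub unfolding ideal_def by blast
      show "x \<oplus> y \<in> \<Union>C" if xy: "x \<in> \<Union>C" "y \<in> \<Union>C" for x y
      proof -
        obtain X Y where XY: "X \<in> C" "Y \<in> C" "x \<in> X" "y \<in> Y" using xy by blast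
        then have "ideal X" "ideal Y" using sub by auto
        then show ?thesis using ch XY unfolding ideal_def by blast
      qed
    qed
    then show ?thesis using sub by blast
  qed
  then obtain M where "M \<in> ?A" "\<forall>X\<in>?A. M \<subseteq> X \<longrightarrow> X = M"
    using Zorn_Lemma2[of ?A] by blast
  then show ?thesis unfolding maximal_avoiding_def by blast
qed

definition valuation :: "('a \<Rightarrow> real) \<Rightarrow> bool" where
  "valuation k \<longleftrightarrow> (\<forall>x. 0 \<le> k x \<and> k x \<le> 1) \<and> k Z = 0 \<and> (\<forall>x. k (N x) = 1 - k x)
     \<and> (\<forall>x y. k (x \<oplus> y) = min 1 (k x + k y))"

lemma valuation_minus: "valuation k \<Longrightarrow> k (a \<ominus> b) = max 0 (k a - k b)"
  by (simp add: valuation_def minus_def)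

lemma join_eq_iff_leq: "join P N a b = b \<longleftrightarrow> a \<preceq> b"
proof
  assume "join P N a b = b"
  then have "N a \<oplus> b = N a \<oplus> (N (N a \<oplus> b) \<oplus> b)" by (simp add: join_def)
  also have "\<dots> = one" by (metis add_ac add_neg_self(1))
  finally show "a \<preceq> b" by (simp add: leq_def)
qed (simp add: join_def leq_def)
lemma ominus_eq_minus: "ominus P N a b = a \<ominus> b"
  by (simp add: ominus_def odot_def minus_def)
lemma dist_eq_minus: "q \<preceq> p \<Longrightarrow> dist P N p q = p \<ominus> q"
  by (simp add: dist_def ominus_eq_minus minus_eq_zero_iff[THEN iffD2])

end

section \<open>\<delta>-algebras: halving and dyadic elements\<close>

locale delta_algebra = mv_algebra +
  fixes D :: "(nat \<Rightarrow> 'a) \<Rightarrow> 'a"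
  assumes delta_axioms: "delta_ax (=) D P N Z"
begin

definition halve where "halve x = D (\<lambda>i. if i = 0 then x else Z)"

lemma delta_dist:
  "dist P N (D xs) (D (\<lambda>i. if i = 0 then xs 0 else Z)) = D (\<lambda>i. if i = 0 then Z else xs i)"
  using delta_axioms unfolding delta_ax_def by blast
lemma halve_delta: "halve (D xs) = D (\<lambda>i. halve (xs i))"
  using delta_axioms unfolding delta_ax_def halve_def half_def by blast
lemma delta_const: "D (\<lambda>_. x) = x"
  using delta_axioms unfolding delta_ax_def by blast
lemma delta_shift: "D (\<lambda>i. if i = 0 then Z else xs (i - 1)) = halve (D xs)"
  using delta_axioms unfolding delta_ax_def halve_def half_def by blast
lemma delta_leq_delta_add: "D xs \<preceq> D (\<lambda>i. xs i \<oplus> ys i)"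
  using delta_axioms unfolding delta_ax_def join_eq_iff_leq[symmetric] by blast
lemma halve_minus: "halve (x \<ominus> y) = halve x \<ominus> halve y"
  using delta_axioms unfolding delta_ax_def halve_def half_def ominus_eq_minus by blast

lemma delta_mono: "(\<And>i. xs i \<preceq> ys i) \<Longrightarrow> D xs \<preceq> D ys"
  using delta_leq_delta_add[of xs "\<lambda>i. ys i \<ominus> xs i"] by (simp add: add_minus_cancel)
lemma halve_mono: "x \<preceq> y \<Longrightarrow> halve x \<preceq> halve y"
  unfolding halve_def by (rule delta_mono) simp
lemma halve_zero[simp]: "halve Z = Z"
  unfolding halve_def using delta_const[of Z] by (simp add: if_distrib cong: if_cong)

lemma halve_leq_delta: "halve (xs 0) \<preceq> D xs"
proof -
  have "xs = (\<lambda>i. (if i = 0 then xs 0 else Z) \<oplus> (if i = 0 then Z else xs i))" by auto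
  then show ?thesis
    using delta_leq_delta_add[of "\<lambda>i. if i = 0 then xs 0 else Z" "\<lambda>i. if i = 0 then Z else xs i"]
    unfolding halve_def by simp
qed

lemma delta_minus_halve: "D xs \<ominus> halve (xs 0) = halve (D (\<lambda>i. xs (Suc i)))"
proof -
  have "(\<lambda>i. if i = 0 then Z else xs i) = (\<lambda>i. if i = 0 then Z else (\<lambda>i. xs (Suc i)) (i - 1))"
    by auto
  then show ?thesis
    using delta_dist[of xs] delta_shift[of "\<lambda>i. xs (Suc i)"] dist_eq_minus[OF halve_leq_delta]
    by (simp add: halve_def)
qed

lemma delta_split: "D xs = halve (xs 0) \<oplus> halve (D (\<lambda>i. xs (Suc i)))"
  using add_minus_cancel[OF halve_leq_delta[of xs]] delta_minus_halve[of xs] by simp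

lemma halve_add_halve: "halve x \<oplus> halve x = x"
  using delta_split[of "\<lambda>_. x"] by (simp add: delta_const)

lemma halve_add:
  assumes "x \<preceq> N y" shows "halve (x \<oplus> y) = halve y \<oplus> halve x"
proof -
  have "halve x = halve (x \<oplus> y) \<ominus> halve y"
    using halve_minus[of "x \<oplus> y" y] add_minus_cancel_right[OF assms] by simp
  moreover have "halve y \<preceq> halve (x \<oplus> y)" by (rule halve_mono) simp
  ultimately show ?thesis by (simp add: add_minus_cancel)
qed

lemma neg_halve_one: "N (halve one) = halve one"
  using delta_minus_halve[of "\<lambda>_. one"] by (simp add: delta_const minus_def)

lemma neg_halve: "N (halve x) = halve one \<oplus> halve (N x)"
proof -
  have minus: "halve (N x) = halve one \<ominus> halve x"
    using halve_minus[of one x] by (simp add: minus_def)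
  have "halve one \<preceq> N (halve x)"
    using neg_antimono[OF halve_mono[OF leq_one[of x]]] neg_halve_one by simp
  then have "N (halve x) = halve one \<oplus> (N (halve x) \<ominus> halve one)" by (simp add: add_minus_cancel)
  also have "N (halve x) \<ominus> halve one = halve one \<ominus> halve x"
    using neg_halve_one by (metis minus_def neg_neg add_commute)
  finally show ?thesis using minus by simp
qed

text \<open>\<open>dyad n\<close> and \<open>dyadic n j\<close> stand for \<open>1/2^n\<close> and \<open>j/2^n\<close> (truncated at \<open>one\<close>).\<close>
definition dyad :: "nat \<Rightarrow> 'a" where "dyad n = (halve ^^ n) one"
definition dyadic :: "nat \<Rightarrow> nat \<Rightarrow> 'a" where "dyadic n j = ntimes j (dyad n)"

lemma dyad_0: "dyad 0 = one" by (simp add: dyad_def)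
lemma dyad_Suc: "dyad (Suc n) = halve (dyad n)" by (simp add: dyad_def)
lemma dyad_add_dyad: "dyad (Suc n) \<oplus> dyad (Suc n) = dyad n"
  by (simp add: dyad_Suc halve_add_halve)

lemma dyadic_0[simp]: "dyadic n 0 = Z" by (simp add: dyadic_def)
lemma dyadic_1[simp]: "dyadic n 1 = dyad n" "dyadic n (Suc 0) = dyad n" by (simp_all add: dyadic_def)
lemma dyadic_Suc: "dyadic n (Suc j) = dyadic n j \<oplus> dyad n"
  by (simp add: dyadic_def ntimes_Suc add_commute)
lemma dyadic_add: "dyadic n (i + j) = dyadic n i \<oplus> dyadic n j"
  by (simp add: dyadic_def ntimes_add)
lemma dyadic_mono: "i \<le> j \<Longrightarrow> dyadic n i \<preceq> dyadic n j"
  by (simp add: dyadic_def ntimes_mono)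

lemma ntimes_double: "ntimes j (x \<oplus> x) = ntimes (2 * j) x"
  by (induction j) (simp_all add: ntimes_Suc add_ac)

lemma dyadic_rescale: "dyadic (n + k) (j * 2^k) = dyadic n j"
proof (induction k arbitrary: j)
  case 0 then show ?case by simp
next
  case (Suc k)
  have "dyadic (n + Suc k) (j * 2 ^ Suc k) = dyadic (Suc (n + k)) (2 * (j * 2^k))"
    by (simp add: ac_simps)
  also have "\<dots> = dyadic (n + k) (j * 2^k)"
    by (simp add: dyadic_def ntimes_double[symmetric] dyad_add_dyad)
  finally show ?case using Suc by simp
qed

lemma halve_one_eq_dyadic: "halve one = dyadic (Suc n) (2^n)"
  using dyadic_rescale[of 1 n 1] by (simp add: dyad_Suc dyad_0)

lemma dyadic_halve_of_neg:
  assumes neg: "\<And>j. j \<le> 2^n \<Longrightarrow> N (dyadic n j) = dyadic n (2^n - j)"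
  shows "j \<le> 2^n \<Longrightarrow> halve (dyadic n j) = dyadic (Suc n) j"
proof (induction j)
  case 0 then show ?case by simp
next
  case (Suc j)
  have "dyad n \<preceq> dyadic n (2^n - j)"
    using Suc.prems dyadic_mono[of 1 "2^n - j" n] by simp
  then have "dyadic n j \<preceq> N (dyad n)"
    using neg_antimono neg[of "2^n - j"] Suc.prems by fastforce
  then have "halve (dyadic n (Suc j)) = halve (dyad n) \<oplus> halve (dyadic n j)"
    by (simp add: dyadic_Suc halve_add)
  then show ?case using Suc by (simp add: dyad_Suc dyadic_Suc add_commute)
qed

lemma dyadic_neg_step:
  assumes neg: "\<And>j. j \<le> 2^n \<Longrightarrow> N (dyadic n j) = dyadic n (2^n - j)"
    and halve: "\<And>j. j \<le> 2^n \<Longrightarrow> halve (dyadic n j) = dyadic (Suc n) j"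
    and j: "j \<le> 2^Suc n"
  shows "N (dyadic (Suc n) j) = dyadic (Suc n) (2^Suc n - j)"
proof (cases "j \<le> 2^n")
  case True
  have "N (dyadic (Suc n) j) = N (halve (dyadic n j))" using halve[OF True] by simp
  also have "\<dots> = halve one \<oplus> halve (dyadic n (2^n - j))" using neg_halve neg[OF True] by simp
  also have "\<dots> = dyadic (Suc n) (2^n) \<oplus> dyadic (Suc n) (2^n - j)"
    using halve_one_eq_dyadic halve[of "2^n - j"] by simp
  finally show ?thesis using True by (simp add: dyadic_add[symmetric] mult_2)
next
  case False
  define i where "i = j - 2^n"
  have i: "i \<le> 2^n" "j = 2^n + i" using False j by (auto simp: i_def)
  have "dyadic (Suc n) j = halve one \<oplus> halve (dyadic n i)"
    using i halve_one_eq_dyadic halve[of i] by (simp add: dyadic_add)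
  also have "\<dots> = N (halve (N (dyadic n i)))" using neg_halve[of "N (dyadic n i)"] by simp
  finally have "N (dyadic (Suc n) j) = halve (dyadic n (2^n - i))" using neg[OF i(1)] by simp
  then show ?thesis using halve[of "2^n - i"] i by simp
qed

lemma dyadic_neg: "j \<le> 2^n \<Longrightarrow> N (dyadic n j) = dyadic n (2^n - j)"
proof (induction n arbitrary: j)
  case 0
  then have "j = 0 \<or> j = 1" by auto
  then show ?case by (auto simp: dyad_0)
next
  case (Suc n)
  then show ?case using dyadic_neg_step dyadic_halve_of_neg by blast
qed

lemma dyadic_full: "dyadic n (2^n) = one"
  using dyadic_neg[of 0 n] by simp

lemma neg_dyad_1: "N (dyad 1) = dyad 1"
  by (simp add: dyad_Suc dyad_0 neg_halve_one)

lemma archimedean: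
  assumes c: "\<And>n. c \<preceq> dyad n" shows "c = Z"
proof -
  define xs where "xs i = ntimes (2^i) c" for i
  have ntimes_leq: "ntimes (2^i) c \<preceq> dyad n" if "c \<preceq> dyad (n + i)" for i n
    using that
  proof (induction i arbitrary: n)
    case 0 then show ?case by simp
  next
    case (Suc i)
    have "ntimes (2^i) c \<preceq> dyad (Suc n)" using Suc.IH[of "Suc n"] Suc.prems by simp
    then have "ntimes (2^i) c \<oplus> ntimes (2^i) c \<preceq> dyad n"
      using add_mono dyad_add_dyad by fastforce
    then show ?case by (simp add: ntimes_add[symmetric] mult_2)
  qed
  have xs_leq: "xs i \<preceq> dyad 1" for i
    using ntimes_leq[of 1 i] c[of "1 + i"] by (simp add: xs_def)
  have halve_xs: "halve (xs (Suc i)) = xs i" for i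
  proof -
    have "dyad 1 \<preceq> N (xs i)" using neg_antimono[OF xs_leq[of i]] neg_dyad_1 by simp
    with xs_leq have "xs i \<preceq> N (xs i)" by (rule leq_trans)
    moreover have "xs (Suc i) = xs i \<oplus> xs i" by (simp add: xs_def ntimes_add[symmetric] mult_2)
    ultimately show ?thesis using halve_add halve_add_halve by simp
  qed
  define V where "V = D xs"
  have "halve (D (\<lambda>i. xs (Suc i))) = V" using halve_delta[of "\<lambda>i. xs (Suc i)"] halve_xs
    by (simp add: V_def)
  then have absorb: "halve c \<oplus> V = V" using delta_split[of xs] by (simp add: V_def xs_def)
  have "V \<preceq> dyad 1" unfolding V_def using delta_mono[OF xs_leq] by (simp add: delta_const)
  then have "dyad 1 \<preceq> N V" using neg_antimono neg_dyad_1 by fastforce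
  moreover have "halve c \<preceq> dyad 1" using halve_mono[OF c[of 0]] by (simp add: dyad_Suc dyad_0)
  ultimately have "meet (halve c) (N V) = halve c" using leq_trans meet_eq_left by blast
  moreover have "meet (halve c) (N V) = Z" using absorb by (simp add: meet_def times_def add_commute)
  ultimately show ?thesis using halve_add_halve[of c] by simp
qed

end

section \<open>Valuations into \<open>[0,1]\<close> from maximal ideals\<close>

lemma bracket_error_neg:
  fixes t j u v :: real
  assumes "t > 0" "(t - j - 1)/t \<le> u" "u \<le> (t - j)/t" "j/t \<le> v" "v \<le> (j+1)/t"
  shows "\<bar>u - (1 - v)\<bar> \<le> 2/t"
proof -
  have "t - j - 1 \<le> u * t" "u * t \<le> t - j" "j \<le> v * t" "v * t \<le> j + 1"
    using assms by (simp_all add: field_simps)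
  then have "\<bar>u * t - (1 - v) * t\<bar> \<le> 2" by (simp add: algebra_simps abs_le_iff)
  then have "\<bar>u - (1 - v)\<bar> * t \<le> 2"
    by (metis abs_mult abs_of_pos assms(1) left_diff_distrib)
  then show ?thesis using assms(1) by (simp add: field_simps)
qed

lemma bracket_error_add:
  fixes t j l u v w :: real
  assumes "t > 0" "min (j + l) t / t \<le> w" "w \<le> min (j + l + 2) t / t"
    "j/t \<le> u" "u \<le> (j+1)/t" "l/t \<le> v" "v \<le> (l+1)/t"
  shows "\<bar>w - min 1 (u + v)\<bar> \<le> 2/t"
proof -
  have "min (j + l) t \<le> w * t" "w * t \<le> min (j + l + 2) t"
    "j \<le> u * t" "u * t \<le> j + 1" "l \<le> v * t" "v * t \<le> l + 1"
    using assms by (simp_all add: field_simps)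
  moreover have "min 1 (u + v) * t = min t (u * t + v * t)"
    using assms(1) min_mult_distrib_right[of 1 "u+v" t] by (simp add: distrib_right)
  ultimately have "\<bar>w * t - min 1 (u + v) * t\<bar> \<le> 2"
    by (auto simp: min_def abs_le_iff split: if_splits)
  then have "\<bar>w - min 1 (u + v)\<bar> * t \<le> 2"
    by (metis abs_mult abs_of_pos assms(1) left_diff_distrib)
  then show ?thesis using assms(1) by (simp add: field_simps)
qed

lemma zero_if_abs_le_dyadic:
  fixes x :: real
  assumes "\<And>n. \<bar>x\<bar> \<le> 2 / 2^n" shows "x = 0"
proof (rule ccontr)
  assume "x \<noteq> 0"
  then obtain n where n: "(1/2::real)^n < \<bar>x\<bar>/2"
    using real_arch_pow_inv[of "\<bar>x\<bar>/2" "1/2"] by auto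
  with assms[of n] show False by (simp add: power_divide field_simps)
qed

locale delta_algebra_max_ideal = delta_algebra +
  fixes M c
  assumes maximal: "maximal_avoiding M c"
begin

lemma ideal_M: "ideal M"
  using maximal by (simp add: maximal_avoiding_def)

definition leq_mod where "leq_mod a b \<longleftrightarrow> a \<ominus> b \<in> M"

lemma leq_mod_of_leq: "x \<preceq> y \<Longrightarrow> leq_mod x y"
  by (simp add: leq_mod_def minus_eq_zero_iff[THEN iffD2] ideal_zero[OF ideal_M])
lemma leq_mod_total: "leq_mod a b \<or> leq_mod b a"
  unfolding leq_mod_def using maximal_avoiding_linear[OF maximal] .

lemma leq_mod_trans:
  assumes "leq_mod a b" "leq_mod b c'" shows "leq_mod a c'"
proof -
  have "a \<preceq> b \<oplus> (a \<ominus> b)" using leq_minus_add[of a b] by (simp add: add_commute)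
  also have "\<dots> \<preceq> (c' \<oplus> (b \<ominus> c')) \<oplus> (a \<ominus> b)"
    by (rule add_right_mono) (use leq_minus_add[of b c'] in \<open>simp add: add_commute\<close>)
  finally have "a \<preceq> (c' \<oplus> (b \<ominus> c')) \<oplus> (a \<ominus> b)" .
  then have "a \<ominus> c' \<preceq> (b \<ominus> c') \<oplus> (a \<ominus> b)" by (simp add: minus_leq_iff add_assoc)
  then show ?thesis
    using assms ideal_add[OF ideal_M] ideal_down[OF ideal_M] unfolding leq_mod_def by blast
qed

lemma leq_mod_add:
  assumes "leq_mod a a'" "leq_mod b b'" shows "leq_mod (a \<oplus> b) (a' \<oplus> b')"
proof -
  have "a \<oplus> b \<preceq> (a' \<oplus> (a \<ominus> a')) \<oplus> (b' \<oplus> (b \<ominus> b'))"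
    using add_mono leq_minus_add[of a a'] leq_minus_add[of b b'] by (simp add: add_commute)
  then have "(a \<oplus> b) \<ominus> (a' \<oplus> b') \<preceq> (a \<ominus> a') \<oplus> (b \<ominus> b')"
    by (simp add: minus_leq_iff add_ac)
  then show ?thesis
    using assms ideal_add[OF ideal_M] ideal_down[OF ideal_M] unfolding leq_mod_def by blast
qed

lemma leq_mod_neg: "leq_mod a b \<Longrightarrow> leq_mod (N b) (N a)"
  by (simp add: leq_mod_def minus_def add_commute)

lemma dyad_notin: "dyad n \<notin> M"
proof
  assume "dyad n \<in> M"
  then have "dyadic n (2^n) \<in> M" unfolding dyadic_def by (rule ideal_ntimes[OF ideal_M])
  then have "one \<in> M" by (simp add: dyadic_full)
  then show False using maximal ideal_down[OF ideal_M leq_one] by (simp add: maximal_avoiding_def)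
qed

lemma leq_mod_dyadic:
  assumes j: "j \<le> 2^n" and l: "l \<le> 2^m" and le: "leq_mod (dyadic n j) (dyadic m l)"
  shows "real j / 2^n \<le> real l / 2^m"
proof -
  define K J L where "K = n + m" and "J = j * 2^m" and "L = l * 2^n"
  have qJ: "dyadic K J = dyadic n j" unfolding K_def J_def by (rule dyadic_rescale)
  have qL: "dyadic K L = dyadic m l" unfolding K_def L_def by (metis add.commute dyadic_rescale)
  have JK: "J \<le> 2^K" using j unfolding J_def K_def by (simp add: power_add)
  have LK: "L \<le> 2^K" using l unfolding L_def K_def by (simp add: power_add mult.commute)
  have "J \<le> L"
  proof (rule ccontr)
    assume "\<not> J \<le> L"
    then have LJ: "L < J" by simp
    define x where "x = dyadic K (J - L)"
    have "x \<preceq> dyadic K (2^K - L)" unfolding x_def using JK by (intro dyadic_mono) simp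
    then have "x \<preceq> N (dyadic K L)" using dyadic_neg[OF LK] by simp
    moreover have "dyadic K J = x \<oplus> dyadic K L"
      using LJ by (simp add: x_def dyadic_add[symmetric])
    ultimately have "dyadic K J \<ominus> dyadic K L = x" by (simp add: add_minus_cancel_right)
    then have "x \<in> M" using le qJ qL unfolding leq_mod_def by simp
    moreover have "dyad K \<preceq> x" unfolding x_def using LJ dyadic_mono[of 1 "J - L" K] by simp
    ultimately show False using ideal_down[OF ideal_M] dyad_notin by blast
  qed
  then have "real (j * 2^m) \<le> real (l * 2^n)" unfolding J_def L_def by (simp only: of_nat_le_iff)
  then have "real j * 2^m \<le> real l * 2^n" by simp
  then show ?thesis by (simp add: field_simps)
qed

definition val :: "'a \<Rightarrow> real" where
  "val a = Sup {real j / 2^n | j n. j \<le> 2^n \<and> leq_mod (dyadic n j) a}"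

lemma val_lower: "j \<le> 2^n \<Longrightarrow> leq_mod (dyadic n j) a \<Longrightarrow> real j / 2^n \<le> val a"
  unfolding val_def by (rule cSup_upper) (auto intro: bdd_aboveI[of _ 1])

lemma val_upper:
  assumes "l \<le> 2^m" "leq_mod a (dyadic m l)" shows "val a \<le> real l / 2^m"
  unfolding val_def
proof (rule cSup_least)
  have "leq_mod (dyadic 0 0) a" by (simp add: leq_mod_of_leq)
  then show "{real j / 2^n | j n. j \<le> 2^n \<and> leq_mod (dyadic n j) a} \<noteq> {}" by force
  fix s assume "s \<in> {real j / 2^n | j n. j \<le> 2^n \<and> leq_mod (dyadic n j) a}"
  then obtain j n where "s = real j / 2^n" "j \<le> 2^n" "leq_mod (dyadic n j) a" by blast
  then show "s \<le> real l / 2^m" using leq_mod_dyadic assms leq_mod_trans by blast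
qed

lemma dyadic_bracket: "\<exists>j. j < 2^n \<and> leq_mod (dyadic n j) a \<and> leq_mod a (dyadic n (Suc j))"
proof -
  define T where "T = {j. j < (2::nat)^n \<and> leq_mod (dyadic n j) a}"
  have "0 \<in> T" unfolding T_def by (simp add: leq_mod_of_leq)
  moreover have fin: "finite T" unfolding T_def by simp
  ultimately have jT: "Max T \<in> T" using Max_in by blast
  have "leq_mod a (dyadic n (Suc (Max T)))"
  proof (cases "Suc (Max T) < 2^n")
    case True
    then have "Suc (Max T) \<notin> T" using Max_ge[OF fin, of "Suc (Max T)"] by auto
    then show ?thesis using True leq_mod_total unfolding T_def by blast
  next
    case False
    then have "Suc (Max T) = 2^n" using jT unfolding T_def by simp
    then show ?thesis by (simp add: dyadic_full leq_mod_of_leq)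
  qed
  then show ?thesis using jT unfolding T_def by blast
qed

lemma val_bracket:
  "\<exists>j. j < 2^n \<and> leq_mod (dyadic n j) a \<and> leq_mod a (dyadic n (Suc j))
     \<and> real j / 2^n \<le> val a \<and> val a \<le> (real j + 1) / 2^n"
proof -
  obtain j where j: "j < 2^n" "leq_mod (dyadic n j) a" "leq_mod a (dyadic n (Suc j))"
    using dyadic_bracket by blast
  moreover have "val a \<le> real (Suc j) / 2^n" using val_upper[of "Suc j" n a] j by simp
  ultimately show ?thesis using val_lower[of j n a] by (auto simp: add.commute)
qed

lemma val_neg: "val (N a) = 1 - val a"
proof (rule eq_iff_diff_eq_0[THEN iffD2], rule zero_if_abs_le_dyadic)
  fix n
  obtain j where j: "j < 2^n" "leq_mod (dyadic n j) a" "leq_mod a (dyadic n (Suc j))"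
    "real j / 2^n \<le> val a" "val a \<le> (real j + 1) / 2^n"
    using val_bracket by blast
  have "leq_mod (dyadic n (2^n - Suc j)) (N a)"
    using leq_mod_neg[OF j(3)] dyadic_neg[of "Suc j" n] j(1) by simp
  then have "real (2^n - Suc j) / 2^n \<le> val (N a)" by (rule val_lower[rotated]) simp
  moreover have "real (2^n - Suc j) = 2^n - real j - 1" using j(1) by (simp add: of_nat_diff)
  ultimately have lo: "(2^n - real j - 1) / 2^n \<le> val (N a)" by simp
  have "leq_mod (N a) (dyadic n (2^n - j))"
    using leq_mod_neg[OF j(2)] dyadic_neg[of j n] j(1) by simp
  then have "val (N a) \<le> real (2^n - j) / 2^n" by (rule val_upper[rotated]) simp
  moreover have "real (2^n - j) = 2^n - real j" using j(1) by (simp add: of_nat_diff)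
  ultimately have hi: "val (N a) \<le> (2^n - real j) / 2^n" by simp
  show "\<bar>val (N a) - (1 - val a)\<bar> \<le> 2 / 2^n"
    by (rule bracket_error_neg[OF _ lo hi j(4) j(5)]) simp
qed

lemma val_add: "val (a \<oplus> b) = min 1 (val a + val b)"
proof (rule eq_iff_diff_eq_0[THEN iffD2], rule zero_if_abs_le_dyadic)
  fix n
  obtain j where j: "j < 2^n" "leq_mod (dyadic n j) a" "leq_mod a (dyadic n (Suc j))"
    "real j / 2^n \<le> val a" "val a \<le> (real j + 1) / 2^n"
    using val_bracket by blast
  obtain l where l: "l < 2^n" "leq_mod (dyadic n l) b" "leq_mod b (dyadic n (Suc l))"
    "real l / 2^n \<le> val b" "val b \<le> (real l + 1) / 2^n"
    using val_bracket by blast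
  define lo hi where "lo = min (j + l) (2^n)" and "hi = min (j + l + 2) (2^n)"
  have "dyadic n lo \<preceq> dyadic n (j + l)" unfolding lo_def by (rule dyadic_mono) simp
  moreover have "leq_mod (dyadic n (j + l)) (a \<oplus> b)"
    using leq_mod_add[OF j(2) l(2)] by (simp add: dyadic_add)
  ultimately have "leq_mod (dyadic n lo) (a \<oplus> b)" using leq_mod_of_leq leq_mod_trans by blast
  then have "real lo / 2^n \<le> val (a \<oplus> b)" by (rule val_lower[rotated]) (simp add: lo_def)
  then have lo': "min (real j + real l) (2^n) / 2^n \<le> val (a \<oplus> b)"
    by (simp add: lo_def of_nat_min)
  have "leq_mod (a \<oplus> b) (dyadic n (j + l + 2))"
    using leq_mod_add[OF j(3) l(3)] by (simp add: dyadic_add[symmetric])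
  moreover have "dyadic n (j + l + 2) \<preceq> dyadic n hi"
    by (cases "j + l + 2 \<le> 2^n") (simp_all add: hi_def dyadic_full)
  ultimately have "leq_mod (a \<oplus> b) (dyadic n hi)" using leq_mod_of_leq leq_mod_trans by blast
  then have "val (a \<oplus> b) \<le> real hi / 2^n" by (rule val_upper[rotated]) (simp add: hi_def)
  then have hi': "val (a \<oplus> b) \<le> min (real j + real l + 2) (2^n) / 2^n"
    by (simp add: hi_def of_nat_min ac_simps)
  show "\<bar>val (a \<oplus> b) - min 1 (val a + val b)\<bar> \<le> 2 / 2^n"
    by (rule bracket_error_add[OF _ lo' hi' j(4) j(5) l(4) l(5)]) simp
qed

lemma valuation_val: "valuation val"
proof -
  have "0 \<le> val a" "val a \<le> 1" for a
    using val_lower[of 0 0 a] val_upper[of 1 0 a] by (simp_all add: leq_mod_of_leq dyad_0)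
  moreover have "val Z = 0"
    using val_upper[of 0 0 Z] val_lower[of 0 0 Z] by (simp add: leq_mod_of_leq)
  ultimately show ?thesis unfolding valuation_def using val_neg val_add by blast
qed

end

context delta_algebra
begin

lemma exists_valuation_pos:
  assumes "c \<noteq> Z" shows "\<exists>k. valuation k \<and> 0 < k c"
proof -
  obtain n where n: "\<not> c \<preceq> dyad n" using archimedean assms by blast
  then have "c \<ominus> dyad n \<noteq> Z" by (simp add: minus_eq_zero_iff)
  then obtain M where M: "maximal_avoiding M (c \<ominus> dyad n)" using exists_maximal_avoiding by blast
  interpret quotient: delta_algebra_max_ideal P N Z D M "c \<ominus> dyad n"
    by unfold_locales (rule M)
  have "\<not> quotient.leq_mod c (dyad n)"
    using M by (simp add: quotient.leq_mod_def maximal_avoiding_def)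
  then have "quotient.leq_mod (dyadic n 1) c" using quotient.leq_mod_total by auto
  then have "1 / 2^n \<le> quotient.val c" using quotient.val_lower[of 1 n c] by simp
  moreover have "(0::real) < 1 / 2^n" by simp
  ultimately have "0 < quotient.val c" by linarith
  with quotient.valuation_val show ?thesis by blast
qed

theorem eq_if_valuations_eq:
  assumes "\<And>k. valuation k \<Longrightarrow> k a = k b" shows "a = b"
proof (rule ccontr)
  assume "a \<noteq> b"
  then have "a \<ominus> b \<noteq> Z \<or> b \<ominus> a \<noteq> Z" using leq_antisym minus_eq_zero_iff by blast
  then obtain k where k: "valuation k" and pos: "0 < k (a \<ominus> b) \<or> 0 < k (b \<ominus> a)"
    using exists_valuation_pos by blast
  have "k a = k b" using assms k .
  then show False using pos valuation_minus[OF k] by simp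
qed

end

section \<open>Terms and the free \<open>\<delta>\<close>-algebra\<close>

lemma eval_map_trm: "eval A e (map_trm g s) = eval A (e \<circ> g) s"
  by (induction s) simp_all

lemma delta_ax_kernel:
  assumes ax: "delta_ax (=) D P N Z"
    and hD: "\<And>xs. f (D' xs) = D (\<lambda>i. f (xs i))" and hP: "\<And>a b. f (P' a b) = P (f a) (f b)"
    and hN: "\<And>a. f (N' a) = N (f a)" and hZ: "f Z' = Z"
  shows "delta_ax (\<lambda>s t. f s = f t) D' P' N' Z'"
proof -
  have f_if: "f (if c then a else b) = (if c then f a else f b)" for c a b
    by simp
  note hom = hD hP hN hZ f_if
  have "mv_ax (=) P N Z" using ax by (simp add: delta_ax_def)
  then have mv: "mv_ax (\<lambda>s t. f s = f t) P' N' Z'" unfolding mv_ax_def hom by blast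
  have derived: "f (half D' Z' a) = half D Z (f a)" "f (ominus P' N' a b) = ominus P N (f a) (f b)"
     "f (join P' N' a b) = join P N (f a) (f b)" "f (dist P' N' a b) = dist P N (f a) (f b)" for a b
    by (simp_all add: half_def ominus_def odot_def join_def dist_def hom cong: if_cong)
  \<comment> \<open>the two axioms whose left-hand sides are not higher-order patterns, instantiated at
    \<open>f \<circ> xs\<close> so that the simplifier can use them\<close>
  have "dist P N (D (\<lambda>i. f (xs i))) (D (\<lambda>i. if i = 0 then f (xs 0) else Z))
      = D (\<lambda>i. if i = 0 then Z else f (xs i))"
    "D (\<lambda>i. if i = 0 then Z else f (xs (i - 1))) = half D Z (D (\<lambda>i. f (xs i)))" for xs
    using ax unfolding delta_ax_def by auto
  with ax mv show ?thesis unfolding delta_ax_def by (simp add: derived hom cong: if_cong)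
qed

lemma dcong_eval_kernel:
  assumes "is_dalg A" shows "dcong {(s, t). eval A e s = eval A e t}"
proof -
  have "delta_ax (\<lambda>s t. eval A e s = eval A e t) Delta Plus Neg Zero"
    using assms unfolding is_dalg_def by (rule delta_ax_kernel) simp_all
  then show ?thesis
    unfolding dcong_def by (auto simp: equiv_def refl_on_def sym_def trans_def)
qed

lemma feq_imp_eval_eq: "is_dalg A \<Longrightarrow> feq s t \<Longrightarrow> eval A e s = eval A e t"
  using dcong_eval_kernel[of A e] unfolding feq_def by blast

lemma delta_algebra_of_dalg:
  assumes "is_dalg A" shows "delta_algebra (pls A) (ng A) (zr A) (dlt A)"
proof -
  have ax: "delta_ax (=) (dlt A) (pls A) (ng A) (zr A)" using assms by (simp add: is_dalg_def)
  then have "mv_ax (=) (pls A) (ng A) (zr A)" by (simp add: delta_ax_def)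
  with ax show ?thesis by (simp add: delta_algebra_def delta_algebra_axioms_def mv_algebra_def)
qed

lemma valuation_eval_in_V_F:
  assumes A: "is_dalg A" and J: "F_ideal W J"
    and k: "mv_algebra.valuation (pls A) (ng A) (zr A) k" and sat: "sat A e (Sigma_of W J)"
  shows "(\<lambda>s. if s \<in> trms W then k (eval A e s) else 0) \<in> V_F W J"
    (is "?h \<in> _")
proof -
  have mv: "mv_algebra (pls A) (ng A) (zr A)"
    using delta_algebra_of_dalg[OF A] by (rule delta_algebra.axioms(1))
  have "?h \<in> MaxF W"
    using k unfolding MaxF_def mv_algebra.valuation_def[OF mv]
    by (auto simp: trms_def dest: feq_imp_eval_eq[OF A, where e = e])
  moreover have "?h a = 0" if "a \<in> J" for a
  proof -
    have "a \<in> trms W" using that J unfolding F_ideal_def by blast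
    then have "eval A e a = zr A" using that sat unfolding Sigma_of_def sat_def by fastforce
    then show ?thesis using \<open>a \<in> trms W\<close> k unfolding mv_algebra.valuation_def[OF mv] by simp
  qed
  ultimately show ?thesis unfolding V_F_def by blast
qed

lemma valuation_on_graph:
  assumes A: "is_dalg A" and J: "F_ideal (insert y xs) J"
    and graph: "pt_of (insert y xs) ` V_F (insert y xs) J = graph_f xs y X f"
    and k: "mv_algebra.valuation (pls A) (ng A) (zr A) k"
    and sat: "sat A e (Sigma_of (insert y xs) J)"
  shows "k (e y) = f (restrict (\<lambda>w. k (e w)) xs)"
proof -
  define W where "W = insert y xs"
  define h where "h s = (if s \<in> trms W then k (eval A e s) else 0)" for s
  have "h \<in> V_F W J" unfolding h_def W_def by (rule valuation_eval_in_V_F[OF A J k sat])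
  then have "pt_of W h \<in> graph_f xs y X f" using graph unfolding W_def by blast
  moreover have "pt_of W h = restrict (\<lambda>w. k (e w)) W"
    by (auto simp: pt_of_def h_def trms_def)
  moreover have "insert y xs \<inter> xs = xs" by blast
  ultimately show ?thesis by (simp add: graph_f_def W_def)
qed

lemma sat_Un: "sat A e (\<Sigma> \<union> \<Sigma>') \<longleftrightarrow> sat A e \<Sigma> \<and> sat A e \<Sigma>'"
  unfolding sat_def by blast

lemma sat_rename_thy:
  "sat A e (rename_thy y z \<Sigma>) \<Longrightarrow> sat A (\<lambda>v. if v = y then e z else e v) \<Sigma>"
proof -
  have "e \<circ> (\<lambda>v. if v = y then z else v) = (\<lambda>v. if v = y then e z else e v)" by auto
  then show "sat A e (rename_thy y z \<Sigma>) \<Longrightarrow> ?thesis"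
    unfolding sat_def rename_thy_def by (auto simp: eval_map_trm)
qed

theorem mainTheorem6:
  fixes xs :: "'v set" and y :: "'v" and X :: "('v \<Rightarrow> real) set"
    and f :: "('v \<Rightarrow> real) \<Rightarrow> real" and J :: "'v trm set"
  assumes "y \<notin> xs"
    and "closedin (cube xs) X"
    and "continuous_map (subtopology (cube xs) X) (top_of_set {0..1}) f"
    and "F_ideal (insert y xs) J"
    and "pt_of (insert y xs) ` V_F (insert y xs) J = graph_f xs y X f"
  shows "implicitly_defines TYPE('a) (Sigma_of (insert y xs) J) y"
  unfolding implicitly_defines_def models_Delta_def
proof (intro allI impI)
  fix z and A :: "'a lalg" and e
  assume A: "is_dalg A"
    and "sat A e (Sigma_of (insert y xs) J \<union> rename_thy y z (Sigma_of (insert y xs) J))"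
  then have sat: "sat A e (Sigma_of (insert y xs) J)"
    and sat': "sat A (\<lambda>v. if v = y then e z else e v) (Sigma_of (insert y xs) J)"
    by (simp_all add: sat_Un sat_rename_thy)
  interpret delta_algebra "pls A" "ng A" "zr A" "dlt A"
    using A by (rule delta_algebra_of_dalg)
  have "e y = e z"
  proof (rule eq_if_valuations_eq)
    fix k assume k: "valuation k"
    have "restrict (\<lambda>w. k (if w = y then e z else e w)) xs = restrict (\<lambda>w. k (e w)) xs"
      using assms(1) by (intro restrict_ext) auto
    then show "k (e y) = k (e z)"
      using valuation_on_graph[OF A assms(4,5) k sat] valuation_on_graph[OF A assms(4,5) k sat']
      by simp
  qed
  then show "eval A e (fst (Var y, Var z)) = eval A e (snd (Var y, Var z))" by simp
qed

end
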